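(* In the setting of the context, let $\mathbf{X}\in\{0,1\}^E$ be the indicator vector of edges matched by MMP-ALG, and for $u\in U$ let $\mathbf{X}_u$ be the restriction of $\mathbf{X}$ to the coordinates in $E(u)$ (other entries set to $0$). Let $x^*_u=\sum_{e\in E(u)}x^*_e$ and let $\mathbf{e}_e$ be the unit vector with a $1$ only at coordinate $e$. Then, in the limit $T\to\infty$ with $|U|=o(\sqrt{T})$, $\Pr[\mathbf{X}_u=\mathbf{0}]=e^{-x^*_u}$ and $\Pr[\mathbf{X}_u=\mathbf{e}_e]=(1-e^{-x^*_u})\frac{x^*_e}{x^*_u}$ for every $e\in E(u)$.
   Context: Bipartite graph $G=(U,V,E)$; online rounds $t=1,\dots,T$, in each of which independently at most one $v\in V$ arrives, $v$ with probability $p_v$, $\sum_v p_v\le1$, $r_v=Tp_v\in[0,1]$. Each $u\in U$ can be matched at most once. $E(w)$ denotes the set of edges incident to $w$. $\mathbf{x}^*\in[0,1]^E$ satisfies $\sum_{e\in E(v)}x^*_e\le r_v$ for all $v\in V$ and $\sum_{e\in E(u)}x^*_e\le1$ for all $u\in U$. MMP-ALG: when $v$ arrives, sample at most one edge $e\in E(v)$, each $e$ with probability $x^*_e/r_v$; if $e=(u,v)$ is sampled and $u$ is still unmatched, match $e$, otherwise skip. *)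

theory Defs
  imports "HOL-Probability.Probability" "HOL-Library.Landau_Symbols"
begin

definition edges_at_u :: "('u \<times> 'v) set \<Rightarrow> 'u \<Rightarrow> ('u \<times> 'v) set" where
  "edges_at_u E u = {e \<in> E. fst e = u}"

definition edges_at_v :: "('u \<times> 'v) set \<Rightarrow> 'v \<Rightarrow> ('u \<times> 'v) set" where
  "edges_at_v E v = {e \<in> E. snd e = v}"

definition rate :: "nat \<Rightarrow> ('v \<Rightarrow> real) \<Rightarrow> 'v \<Rightarrow> real" where
  "rate T p v = real T * p v"

text \<open>Valid instance for horizon T: graph, arrival probabilities p, LP solution x*.\<close>
definition mmp_instance ::
  "'u set \<Rightarrow> 'v set \<Rightarrow> ('u \<times> 'v) set \<Rightarrow> ('v \<Rightarrow> real) \<Rightarrow> (('u \<times> 'v) \<Rightarrow> real) \<Rightarrow> nat \<Rightarrow> bool" where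
  "mmp_instance U V E p x T \<longleftrightarrow>
     finite U \<and> finite V \<and> E \<subseteq> U \<times> V \<and>
     (\<forall>v\<in>V. 0 \<le> p v) \<and> (\<Sum>v\<in>V. p v) \<le> 1 \<and>
     (\<forall>v\<in>V. rate T p v \<le> 1) \<and>
     (\<forall>e\<in>E. 0 \<le> x e \<and> x e \<le> 1) \<and>
     (\<forall>v\<in>V. (\<Sum>e\<in>edges_at_v E v. x e) \<le> rate T p v) \<and>
     (\<forall>u\<in>U. (\<Sum>e\<in>edges_at_u E u. x e) \<le> 1)"

definition arrival_pmf :: "'v set \<Rightarrow> ('v \<Rightarrow> real) \<Rightarrow> 'v option pmf" where
  "arrival_pmf V p = embed_pmf (\<lambda>w. case w of
       None \<Rightarrow> 1 - (\<Sum>v\<in>V. p v)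
     | Some v \<Rightarrow> if v \<in> V then p v else 0)"

definition sample_pmf :: "('u \<times> 'v) set \<Rightarrow> (('u \<times> 'v) \<Rightarrow> real) \<Rightarrow> real \<Rightarrow> 'v \<Rightarrow> ('u \<times> 'v) option pmf" where
  "sample_pmf E x rv v = embed_pmf (\<lambda>w. case w of
       None \<Rightarrow> 1 - (\<Sum>e\<in>edges_at_v E v. x e / rv)
     | Some e \<Rightarrow> if e \<in> edges_at_v E v then x e / rv else 0)"

definition mmp_step :: "'v set \<Rightarrow> ('u \<times> 'v) set \<Rightarrow> ('v \<Rightarrow> real) \<Rightarrow> (('u \<times> 'v) \<Rightarrow> real) \<Rightarrow> nat
      \<Rightarrow> ('u \<times> 'v) set \<Rightarrow> ('u \<times> 'v) set pmf" where
  "mmp_step V E p x T M = bind_pmf (arrival_pmf V p) (\<lambda>a. case a of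
       None \<Rightarrow> return_pmf M
     | Some v \<Rightarrow> map_pmf (\<lambda>s. case s of
            None \<Rightarrow> M
          | Some e \<Rightarrow> if (\<exists>e'\<in>M. fst e' = fst e) then M else insert e M)
          (sample_pmf E x (rate T p v) v))"

primrec mmp_rounds :: "'v set \<Rightarrow> ('u \<times> 'v) set \<Rightarrow> ('v \<Rightarrow> real) \<Rightarrow> (('u \<times> 'v) \<Rightarrow> real) \<Rightarrow> nat
      \<Rightarrow> nat \<Rightarrow> ('u \<times> 'v) set pmf" where
  "mmp_rounds V E p x T 0 = return_pmf {}"
| "mmp_rounds V E p x T (Suc n) = bind_pmf (mmp_rounds V E p x T n) (mmp_step V E p x T)"

definition mmp_run :: "'v set \<Rightarrow> ('u \<times> 'v) set \<Rightarrow> ('v \<Rightarrow> real) \<Rightarrow> (('u \<times> 'v) \<Rightarrow> real) \<Rightarrow> nat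
      \<Rightarrow> ('u \<times> 'v) set pmf" where
  "mmp_run V E p x T = mmp_rounds V E p x T T"

definition match_vec :: "('u \<times> 'v) set \<Rightarrow> ('u \<times> 'v) \<Rightarrow> real" where
  "match_vec M = (\<lambda>e. if e \<in> M then 1 else 0)"

definition restrict_vec :: "('u \<times> 'v) set \<Rightarrow> 'u \<Rightarrow> (('u \<times> 'v) \<Rightarrow> real) \<Rightarrow> ('u \<times> 'v) \<Rightarrow> real" where
  "restrict_vec E u X = (\<lambda>e. if e \<in> edges_at_u E u then X e else 0)"

definition unit_vec :: "('u \<times> 'v) \<Rightarrow> ('u \<times> 'v) \<Rightarrow> real" where
  "unit_vec e = (\<lambda>e'. if e' = e then 1 else 0)"

definition x_vertex :: "('u \<times> 'v) set \<Rightarrow> (('u \<times> 'v) \<Rightarrow> real) \<Rightarrow> 'u \<Rightarrow> real" where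
  "x_vertex E x u = (\<Sum>e\<in>edges_at_u E u. x e)"

end

theory Submission
  imports Defs
begin

(* Only the edges at u matter. Each round independently proposes at most one edge, the edge e
   with probability p_v * x_e / r_v = x_e / T, and the set M \<inter> E(u) of matched edges at u is a
   Markov chain that stays put once nonempty (u is matched at most once) and, while empty, becomes
   {e} exactly when e \<in> E(u) is proposed. So after T rounds it is empty with probability
   (1 - x_u/T)^T and equals {e} with probability (x_e/T) \<Sum>_{k<T} (1 - x_u/T)^k
   = (x_e/x_u) (1 - (1 - x_u/T)^T), and both are within 1/T of their limits. This bound is
   uniform. *)

lemma abs_one_minus_div_power_minus_exp_le:
  fixes a :: real
  assumes "0 \<le> a" "a \<le> real n"
  shows "\<bar>(1 - a / n) ^ n - exp (- a)\<bar> \<le> a\<^sup>2 / n"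
proof (cases "n = 0")
  case True
  with assms show ?thesis by simp
next
  case False
  define t where "t = a / n"
  have t: "0 \<le> t" "t \<le> 1"
    using assms False by (auto simp: t_def divide_le_eq_1)
  have "1 - t \<le> exp (- t)"
    using exp_ge_add_one_self[of "- t"] by simp
  moreover have "exp (- t) \<le> 1 - t + t\<^sup>2"
  proof -
    have "exp (- t) \<le> 1 / (1 + t)"
      using exp_ge_add_one_self[of t] t by (simp add: exp_minus field_simps)
    also have "\<dots> \<le> 1 - t + t\<^sup>2"
      using t by (simp add: field_simps power2_eq_square)
    finally show ?thesis .
  qed
  ultimately have step: "\<bar>(1 - t) - exp (- t)\<bar> \<le> t\<^sup>2"
    by simp
  have "\<bar>(1 - t) ^ n - exp (- a)\<bar> = \<bar>(1 - t) ^ n - exp (- t) ^ n\<bar>"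
    using False by (simp add: t_def flip: exp_of_nat_mult)
  also have "\<dots> \<le> n * \<bar>(1 - t) - exp (- t)\<bar>"
    using norm_power_diff[of "1 - t" "exp (- t)" n] t by simp
  also have "\<dots> \<le> n * t\<^sup>2"
    using step by (simp add: mult_left_mono)
  also have "\<dots> = a\<^sup>2 / n"
    using False by (simp add: t_def power2_eq_square field_simps)
  finally show ?thesis by (simp add: t_def)
qed

lemma abs_geometric_sum_minus_exp_le:
  fixes a c :: real
  assumes "0 \<le> c" "c \<le> a" "a \<le> real n"
  shows "\<bar>c / n * (\<Sum>k<n. (1 - a / n) ^ k) - (1 - exp (- a)) * c / a\<bar> \<le> a * c / n"
proof (cases "a = 0")
  case True
  with assms show ?thesis by simp
next
  case False
  define r where "r = 1 - a / n"
  have "c / n * (\<Sum>k<n. r ^ k) = c / a * (a / n * (\<Sum>k<n. r ^ k))"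
    using False by simp
  also have "a / n * (\<Sum>k<n. r ^ k) = 1 - r ^ n"
    using one_diff_power_eq[where x = r] by (simp add: r_def)
  finally have "c / n * (\<Sum>k<n. r ^ k) - (1 - exp (- a)) * c / a = c / a * (exp (- a) - r ^ n)"
    using False by (simp add: field_simps)
  also have "\<bar>\<dots>\<bar> = c / a * \<bar>r ^ n - exp (- a)\<bar>"
    using assms by (simp add: abs_mult abs_minus_commute)
  also have "\<dots> \<le> c / a * (a\<^sup>2 / n)"
    using assms abs_one_minus_div_power_minus_exp_le[of a n] by (intro mult_left_mono) (auto simp: r_def)
  also have "\<dots> = a * c / n"
    using False by (simp add: power2_eq_square field_simps)
  finally show ?thesis by (simp add: r_def)
qed

lemma pmf_embed_pmf_finite_support:
  assumes "finite A" "\<And>x. 0 \<le> f x" "\<And>x. x \<notin> A \<Longrightarrow> f x = 0" "sum f A = 1"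
  shows "pmf (embed_pmf f) x = f x"
proof (rule pmf_embed_pmf)
  have "(\<integral>\<^sup>+x. ennreal (f x) \<partial>count_space UNIV) = (\<Sum>x\<in>A. ennreal (f x))"
    using assms by (intro nn_integral_count_space') auto
  also have "\<dots> = 1"
    using assms by (simp add: sum_ennreal)
  finally show "(\<integral>\<^sup>+x. ennreal (f x) \<partial>count_space UNIV) = 1" .
qed (fact assms)

lemma pmf_bind_absorbing:
  "pmf (bind_pmf A (\<lambda>y. if y = a then B else return_pmf y)) z
     = pmf A a * pmf B z + (if z = a then 0 else pmf A z)"
proof -
  have "pmf (bind_pmf A (\<lambda>y. if y = a then B else return_pmf y)) z
      = (\<integral>y. pmf B z * indicator {a} y + indicator ({z} - {a}) y \<partial>measure_pmf A)"
    unfolding pmf_bind by (intro Bochner_Integration.integral_cong) (auto simp: indicator_def)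
  also have "\<dots> = pmf A a * pmf B z + (if z = a then 0 else pmf A z)"
    by (subst Bochner_Integration.integral_add)
      (auto simp: measure_pmf_single measure_pmf.emeasure_eq_measure intro!: integrable_indicator)
  finally show ?thesis .
qed

lemma restrict_vec_match_vec: "restrict_vec E u (match_vec M) = match_vec (M \<inter> edges_at_u E u)"
  by (auto simp: restrict_vec_def match_vec_def)

lemma inj_match_vec: "inj match_vec"
  by (rule injI) (auto simp: match_vec_def fun_eq_iff split: if_splits)

lemma match_vec_empty: "match_vec {} = (\<lambda>_. 0)"
  by (simp add: match_vec_def)

lemma match_vec_singleton: "match_vec {e} = unit_vec e"
  by (simp add: match_vec_def unit_vec_def fun_eq_iff)

lemma pmf_map_restrict_vec_match_vec:
  "pmf (map_pmf (\<lambda>M. restrict_vec E u (match_vec M)) D) (match_vec S)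
     = pmf (map_pmf (\<lambda>M. M \<inter> edges_at_u E u) D) S"
proof -
  have "(\<lambda>M. restrict_vec E u (match_vec M)) = match_vec \<circ> (\<lambda>M. M \<inter> edges_at_u E u)"
    by (simp add: fun_eq_iff restrict_vec_match_vec)
  then show ?thesis
    by (simp flip: pmf.map_comp add: pmf_map_inj'[OF inj_match_vec])
qed

definition round_pmf ::
  "'v set \<Rightarrow> ('u \<times> 'v) set \<Rightarrow> ('v \<Rightarrow> real) \<Rightarrow> (('u \<times> 'v) \<Rightarrow> real) \<Rightarrow> nat \<Rightarrow> ('u \<times> 'v) option pmf" where
  "round_pmf V E p x T = bind_pmf (arrival_pmf V p) (\<lambda>a. case a of
       None \<Rightarrow> return_pmf None
     | Some v \<Rightarrow> sample_pmf E x (rate T p v) v)"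

definition match_if_free :: "('u \<times> 'v) set \<Rightarrow> ('u \<times> 'v) option \<Rightarrow> ('u \<times> 'v) set" where
  "match_if_free M s = (case s of
       None \<Rightarrow> M
     | Some e \<Rightarrow> if \<exists>e'\<in>M. fst e' = fst e then M else insert e M)"

lemma mmp_step_eq_map_round_pmf: "mmp_step V E p x T M = map_pmf (match_if_free M) (round_pmf V E p x T)"
  unfolding mmp_step_def round_pmf_def map_bind_pmf match_if_free_def
  by (intro bind_pmf_cong) (auto split: option.split)

lemma match_if_free_Int_edges_at_u:
  assumes "M \<subseteq> E"
  shows "match_if_free M s \<inter> edges_at_u E u
       = (if M \<inter> edges_at_u E u = {} then set_option s \<inter> edges_at_u E u else M \<inter> edges_at_u E u)"
  using assms by (auto simp: match_if_free_def edges_at_u_def split: option.split)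

context
  fixes U :: "'u set" and V :: "'v set" and E :: "('u \<times> 'v) set"
    and p :: "'v \<Rightarrow> real" and x :: "('u \<times> 'v) \<Rightarrow> real" and T :: nat
  assumes inst: "mmp_instance U V E p x T"
begin

lemma finite_V: "finite V" and E_subset: "E \<subseteq> U \<times> V"
  using inst by (simp_all add: mmp_instance_def)

lemma finite_E: "finite E"
  using inst by (intro finite_subset[OF E_subset]) (simp add: mmp_instance_def)

lemma finite_edges_at_u: "finite (edges_at_u E u)"
  using finite_E by (simp add: edges_at_u_def)

lemma finite_edges_at_v: "finite (edges_at_v E v)"
  using finite_E by (simp add: edges_at_v_def)

lemma p_nonneg: "v \<in> V \<Longrightarrow> 0 \<le> p v"
  using inst by (simp add: mmp_instance_def)

lemma x_nonneg: "e \<in> E \<Longrightarrow> 0 \<le> x e"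
  using inst by (simp add: mmp_instance_def)

lemma sum_edges_at_v_le_rate: "v \<in> V \<Longrightarrow> (\<Sum>e\<in>edges_at_v E v. x e) \<le> rate T p v"
  using inst by (simp add: mmp_instance_def)

lemma pmf_arrival_pmf:
  "pmf (arrival_pmf V p) a = (case a of None \<Rightarrow> 1 - (\<Sum>v\<in>V. p v) | Some v \<Rightarrow> if v \<in> V then p v else 0)"
  unfolding arrival_pmf_def
  using inst finite_V
  by (intro pmf_embed_pmf_finite_support[where A = "insert None (Some ` V)"])
    (auto simp: mmp_instance_def sum.reindex split: option.split)

lemma set_arrival_pmf: "set_pmf (arrival_pmf V p) \<subseteq> insert None (Some ` V)"
proof
  fix a assume "a \<in> set_pmf (arrival_pmf V p)"
  then have "pmf (arrival_pmf V p) a \<noteq> 0"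
    by (simp add: set_pmf_eq)
  then show "a \<in> insert None (Some ` V)"
    by (cases a) (auto simp: pmf_arrival_pmf split: if_splits)
qed

lemma sum_div_rate_le_one: "(\<Sum>e\<in>edges_at_v E v. x e / rate T p v) \<le> 1"
proof (cases "v \<in> V")
  case True
  have "(\<Sum>e\<in>edges_at_v E v. x e / rate T p v) = (\<Sum>e\<in>edges_at_v E v. x e) / rate T p v"
    by (simp add: sum_divide_distrib)
  also have "\<dots> \<le> 1"
    using sum_edges_at_v_le_rate[OF True] p_nonneg[OF True]
    by (cases "rate T p v = 0") (auto simp: rate_def divide_le_eq_1)
  finally show ?thesis .
next
  case False
  then have "edges_at_v E v = {}"
    using E_subset by (auto simp: edges_at_v_def)
  then show ?thesis by simp
qed

lemma pmf_sample_pmf: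
  "pmf (sample_pmf E x (rate T p v) v) s = (case s of
       None \<Rightarrow> 1 - (\<Sum>e\<in>edges_at_v E v. x e / rate T p v)
     | Some e \<Rightarrow> if e \<in> edges_at_v E v then x e / rate T p v else 0)"
  unfolding sample_pmf_def
proof (intro pmf_embed_pmf_finite_support[where A = "insert None (Some ` edges_at_v E v)"])
  have "0 \<le> x e / rate T p v" if "e \<in> edges_at_v E v" for e
    using that E_subset by (auto simp: rate_def edges_at_v_def x_nonneg p_nonneg)
  then show "0 \<le> (case s of
       None \<Rightarrow> 1 - (\<Sum>e\<in>edges_at_v E v. x e / rate T p v)
     | Some e \<Rightarrow> if e \<in> edges_at_v E v then x e / rate T p v else 0)" for s
    using sum_div_rate_le_one by (auto split: option.split)
qed (use finite_edges_at_v in \<open>auto simp: sum.reindex split: option.split\<close>)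

lemma set_sample_pmf: "set_pmf (sample_pmf E x (rate T p v) v) \<subseteq> insert None (Some ` E)"
proof
  fix s assume "s \<in> set_pmf (sample_pmf E x (rate T p v) v)"
  then have "pmf (sample_pmf E x (rate T p v) v) s \<noteq> 0"
    by (simp add: set_pmf_eq)
  then show "s \<in> insert None (Some ` E)"
    by (cases s) (auto simp: pmf_sample_pmf edges_at_v_def split: if_splits)
qed

lemma set_round_pmf: "set_pmf (round_pmf V E p x T) \<subseteq> insert None (Some ` E)"
  unfolding round_pmf_def set_bind_pmf by (auto split: option.splits dest: set_sample_pmf[THEN subsetD])

lemma pmf_round_pmf_Some:
  assumes "e \<in> E"
  shows "pmf (round_pmf V E p x T) (Some e) = x e / T"
proof -
  let ?K = "\<lambda>a. case a of None \<Rightarrow> return_pmf None | Some v \<Rightarrow> sample_pmf E x (rate T p v) v"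
  have e: "snd e \<in> V" "e \<in> edges_at_v E (snd e)"
    using assms E_subset by (auto simp: edges_at_v_def)
  have "pmf (round_pmf V E p x T) (Some e) = (\<Sum>a\<in>Some ` V. pmf (arrival_pmf V p) a *\<^sub>R pmf (?K a) (Some e))"
    unfolding round_pmf_def pmf_bind
  proof (rule integral_measure_pmf[OF finite_imageI[OF finite_V]])
    fix a assume "a \<in> set_pmf (arrival_pmf V p)" "pmf (?K a) (Some e) \<noteq> 0"
    then show "a \<in> Some ` V"
      using set_arrival_pmf by (cases a) auto
  qed
  also have "\<dots> = (\<Sum>v\<in>V. p v * pmf (sample_pmf E x (rate T p v) v) (Some e))"
    by (simp add: sum.reindex pmf_arrival_pmf)
  also have "\<dots> = (\<Sum>v\<in>V. if v = snd e then p v * (x e / rate T p v) else 0)"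
  proof (intro sum.cong refl)
    fix v
    show "p v * pmf (sample_pmf E x (rate T p v) v) (Some e) = (if v = snd e then p v * (x e / rate T p v) else 0)"
      using assms by (simp add: pmf_sample_pmf edges_at_v_def)
  qed
  also have "\<dots> = p (snd e) * (x e / rate T p (snd e))"
    using e finite_V by simp
  also have "\<dots> = x e / T"
  proof (cases "p (snd e) = 0")
    case True
    have "x e \<le> (\<Sum>e'\<in>edges_at_v E (snd e). x e')"
      using e finite_edges_at_v by (intro member_le_sum) (auto simp: edges_at_v_def x_nonneg)
    also have "\<dots> \<le> rate T p (snd e)"
      using e(1) by (rule sum_edges_at_v_le_rate)
    finally have "x e = 0"
      using x_nonneg[OF assms] True by (simp add: rate_def)
    then show ?thesis by simp
  qed (simp add: rate_def)
  finally show ?thesis .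
qed

lemma set_mmp_rounds: "set_pmf (mmp_rounds V E p x T n) \<subseteq> Pow E"
proof (induction n)
  case (Suc n)
  have "match_if_free M s \<subseteq> E" if "M \<subseteq> E" "s \<in> set_pmf (round_pmf V E p x T)" for M s
    using that set_round_pmf by (auto simp: match_if_free_def split: option.splits)
  with Suc show ?case
    unfolding mmp_rounds.simps mmp_step_eq_map_round_pmf set_bind_pmf set_map_pmf by blast
qed simp

lemma map_mmp_rounds_Suc_Int_edges_at_u:
  "map_pmf (\<lambda>M. M \<inter> edges_at_u E u) (mmp_rounds V E p x T (Suc n))
     = bind_pmf (map_pmf (\<lambda>M. M \<inter> edges_at_u E u) (mmp_rounds V E p x T n))
         (\<lambda>S. if S = {} then map_pmf (\<lambda>s. set_option s \<inter> edges_at_u E u) (round_pmf V E p x T)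
               else return_pmf S)"
  unfolding mmp_rounds.simps map_bind_pmf bind_map_pmf
proof (intro bind_pmf_cong refl)
  fix M assume "M \<in> set_pmf (mmp_rounds V E p x T n)"
  then have "M \<subseteq> E"
    using set_mmp_rounds by blast
  then show "map_pmf (\<lambda>M. M \<inter> edges_at_u E u) (mmp_step V E p x T M)
      = (if M \<inter> edges_at_u E u = {} then map_pmf (\<lambda>s. set_option s \<inter> edges_at_u E u) (round_pmf V E p x T)
         else return_pmf (M \<inter> edges_at_u E u))"
    by (simp add: mmp_step_eq_map_round_pmf pmf.map_comp o_def match_if_free_Int_edges_at_u)
qed

lemma pmf_proposal_singleton:
  assumes "e \<in> edges_at_u E u"
  shows "pmf (map_pmf (\<lambda>s. set_option s \<inter> edges_at_u E u) (round_pmf V E p x T)) {e} = x e / T"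
proof -
  have "(\<lambda>s. set_option s \<inter> edges_at_u E u) -` {{e}} = {Some e}"
    using assms by (auto split: option.splits)
  with assms show ?thesis
    by (simp add: pmf_map measure_pmf_single pmf_round_pmf_Some edges_at_u_def)
qed

lemma pmf_proposal_empty:
  "pmf (map_pmf (\<lambda>s. set_option s \<inter> edges_at_u E u) (round_pmf V E p x T)) {} = 1 - x_vertex E x u / T"
proof -
  have "(\<lambda>s. set_option s \<inter> edges_at_u E u) -` {{}} = - Some ` edges_at_u E u"
    by (auto split: option.splits)
  then have "pmf (map_pmf (\<lambda>s. set_option s \<inter> edges_at_u E u) (round_pmf V E p x T)) {}
      = 1 - measure_pmf.prob (round_pmf V E p x T) (Some ` edges_at_u E u)"
    using measure_pmf.prob_compl[of "Some ` edges_at_u E u" "round_pmf V E p x T"]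
    by (simp add: pmf_map Compl_eq_Diff_UNIV)
  also have "measure_pmf.prob (round_pmf V E p x T) (Some ` edges_at_u E u) = x_vertex E x u / T"
    using finite_edges_at_u
    by (simp add: measure_measure_pmf_finite sum.reindex pmf_round_pmf_Some edges_at_u_def
        x_vertex_def sum_divide_distrib)
  finally show ?thesis .
qed

lemma pmf_mmp_rounds_Int_edges_at_u_empty:
  "pmf (map_pmf (\<lambda>M. M \<inter> edges_at_u E u) (mmp_rounds V E p x T n)) {} = (1 - x_vertex E x u / T) ^ n"
proof (induction n)
  case (Suc n)
  then show ?case
    by (simp add: map_mmp_rounds_Suc_Int_edges_at_u pmf_bind_absorbing pmf_proposal_empty
        del: mmp_rounds.simps)
qed simp

lemma pmf_mmp_rounds_Int_edges_at_u_singleton: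
  assumes "e \<in> edges_at_u E u"
  shows "pmf (map_pmf (\<lambda>M. M \<inter> edges_at_u E u) (mmp_rounds V E p x T n)) {e}
    = x e / T * (\<Sum>k<n. (1 - x_vertex E x u / T) ^ k)"
proof (induction n)
  case (Suc n)
  then show ?case
    using assms
    by (simp add: map_mmp_rounds_Suc_Int_edges_at_u pmf_bind_absorbing pmf_proposal_singleton
        pmf_mmp_rounds_Int_edges_at_u_empty algebra_simps del: mmp_rounds.simps)
qed simp

lemma x_vertex_bounds:
  assumes "u \<in> U"
  shows "0 \<le> x_vertex E x u" "x_vertex E x u \<le> 1"
  using inst assms by (auto simp: mmp_instance_def x_vertex_def edges_at_u_def x_nonneg intro!: sum_nonneg)

lemma x_le_x_vertex:
  assumes "e \<in> edges_at_u E u"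
  shows "0 \<le> x e" "x e \<le> x_vertex E x u"
proof -
  have "edges_at_u E u \<subseteq> E"
    by (auto simp: edges_at_u_def)
  with assms show "0 \<le> x e" "x e \<le> x_vertex E x u"
    unfolding x_vertex_def using finite_edges_at_u by (auto simp: x_nonneg intro!: member_le_sum)
qed

lemma mmp_run_restrict_vec_error:
  assumes "u \<in> U" "1 \<le> T"
  defines "P \<equiv> pmf (map_pmf (\<lambda>M. restrict_vec E u (match_vec M)) (mmp_run V E p x T))"
    and "a \<equiv> x_vertex E x u"
  shows "\<bar>P (\<lambda>_. 0) - exp (- a)\<bar> \<le> 1 / T"
    and "e \<in> edges_at_u E u \<Longrightarrow> \<bar>P (unit_vec e) - (1 - exp (- a)) * x e / a\<bar> \<le> 1 / T"
proof -
  have a: "0 \<le> a" "a \<le> 1" "a \<le> T"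
    using x_vertex_bounds[OF \<open>u \<in> U\<close>] assms by (auto simp: a_def)
  have "\<bar>P (\<lambda>_. 0) - exp (- a)\<bar> \<le> a\<^sup>2 / T"
    using abs_one_minus_div_power_minus_exp_le[OF a(1,3)]
    by (simp add: P_def a_def mmp_run_def pmf_map_restrict_vec_match_vec pmf_mmp_rounds_Int_edges_at_u_empty
        flip: match_vec_empty)
  also have "\<dots> \<le> 1 / T"
    using a by (intro divide_right_mono) (auto simp: power_le_one)
  finally show "\<bar>P (\<lambda>_. 0) - exp (- a)\<bar> \<le> 1 / T" .
  assume e: "e \<in> edges_at_u E u"
  note xe = x_le_x_vertex[OF e, folded a_def]
  have "\<bar>P (unit_vec e) - (1 - exp (- a)) * x e / a\<bar> \<le> a * x e / T"
    using abs_geometric_sum_minus_exp_le[OF xe a(3)] e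
    by (simp add: P_def a_def mmp_run_def pmf_map_restrict_vec_match_vec pmf_mmp_rounds_Int_edges_at_u_singleton
        flip: match_vec_singleton)
  also have "\<dots> \<le> 1 / T"
    using a xe by (intro divide_right_mono mult_le_one) auto
  finally show "\<bar>P (unit_vec e) - (1 - exp (- a)) * x e / a\<bar> \<le> 1 / T" .
qed

end

theorem lemma3:
  fixes U :: "nat \<Rightarrow> 'u set" and V :: "nat \<Rightarrow> 'v set"
    and E :: "nat \<Rightarrow> ('u \<times> 'v) set" and p :: "nat \<Rightarrow> 'v \<Rightarrow> real"
    and x :: "nat \<Rightarrow> ('u \<times> 'v) \<Rightarrow> real" and u :: "nat \<Rightarrow> 'u"
  assumes inst: "eventually (\<lambda>T. mmp_instance (U T) (V T) (E T) (p T) (x T) T) sequentially"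
    and small: "(\<lambda>T. real (card (U T))) \<in> o(\<lambda>T. sqrt (real T))"
    and uU: "eventually (\<lambda>T. u T \<in> U T) sequentially"
  shows "(\<lambda>T. pmf (map_pmf (\<lambda>M. restrict_vec (E T) (u T) (match_vec M)) (mmp_run (V T) (E T) (p T) (x T) T))
                  (\<lambda>_. 0)
              - exp (- x_vertex (E T) (x T) (u T))) \<longlonglongrightarrow> 0 \<and>
    (\<forall>e :: nat \<Rightarrow> 'u \<times> 'v. eventually (\<lambda>T. e T \<in> edges_at_u (E T) (u T)) sequentially \<longrightarrow>
      (\<lambda>T. pmf (map_pmf (\<lambda>M. restrict_vec (E T) (u T) (match_vec M)) (mmp_run (V T) (E T) (p T) (x T) T))
                  (unit_vec (e T))
              - (1 - exp (- x_vertex (E T) (x T) (u T))) * x T (e T) / x_vertex (E T) (x T) (u T))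
        \<longlonglongrightarrow> 0)"
proof -
  have good: "\<forall>\<^sub>F T in sequentially. mmp_instance (U T) (V T) (E T) (p T) (x T) T \<and> u T \<in> U T \<and> 1 \<le> T"
    using inst uU eventually_ge_at_top[of 1] by eventually_elim simp
  note error = mmp_run_restrict_vec_error[of "U T" "V T" "E T" "p T" "x T" T "u T" for T]
  show ?thesis
  proof (intro conjI allI impI)
    show "(\<lambda>T. pmf (map_pmf (\<lambda>M. restrict_vec (E T) (u T) (match_vec M)) (mmp_run (V T) (E T) (p T) (x T) T))
                  (\<lambda>_. 0) - exp (- x_vertex (E T) (x T) (u T))) \<longlonglongrightarrow> 0"
      by (rule Lim_null_comparison[OF _ lim_1_over_n]) (use good in \<open>eventually_elim, simp add: error(1)\<close>)
  next
    fix e :: "nat \<Rightarrow> 'u \<times> 'v"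
    assume e: "\<forall>\<^sub>F T in sequentially. e T \<in> edges_at_u (E T) (u T)"
    show "(\<lambda>T. pmf (map_pmf (\<lambda>M. restrict_vec (E T) (u T) (match_vec M)) (mmp_run (V T) (E T) (p T) (x T) T))
                  (unit_vec (e T))
              - (1 - exp (- x_vertex (E T) (x T) (u T))) * x T (e T) / x_vertex (E T) (x T) (u T)) \<longlonglongrightarrow> 0"
      by (rule Lim_null_comparison[OF _ lim_1_over_n]) (use good e in \<open>eventually_elim, simp add: error(2)\<close>)
  qed
qed

end
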